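(* Let $X$ be a random variable with CIGF $G_X$. Then $$G_X(\alpha,\beta)\le K_X(\beta)-\alpha K_X(\beta+1)\quad\text{for all }(\alpha,\beta)\in D_X\text{ with }\alpha\in[0,1],$$ $$G_X(\alpha,\beta)\le H_X(\alpha)-\beta H_X(\alpha+1)\quad\text{for all }(\alpha,\beta)\in D_X\text{ with }\beta\in[0,1].$$
   Context: For a random variable $X$ with CDF $F$ and survival function $\overline F=1-F$, let $l=\inf\{x:F(x)>0\}$, $r=\sup\{x:\overline F(x)>0\}$. The CIGF of $X$ is $G_X(\alpha,\beta)=\int_l^r [F(x)]^\alpha[\overline F(x)]^\beta\,dx$ on $D_X=\{(\alpha,\beta)\in\mathbb{R}^2: G_X(\alpha,\beta)<\infty\}$. The cumulative information generating measure is $H_X(\alpha)=G_X(\alpha,0)=\int_l^r[F(x)]^\alpha dx$ and the cumulative residual information generating measure is $K_X(\beta)=G_X(0,\beta)=\int_l^r[\overline F(x)]^\beta dx$. *)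

theory Defs
  imports "HOL-Probability.Probability"
begin

definition cigf_l :: "(real \<Rightarrow> real) \<Rightarrow> ereal" where
  "cigf_l F = Inf {ereal x | x. F x > 0}"

definition cigf_r :: "(real \<Rightarrow> real) \<Rightarrow> ereal" where
  "cigf_r F = Sup {ereal x | x. 1 - F x > 0}"

definition CIGF :: "(real \<Rightarrow> real) \<Rightarrow> real \<Rightarrow> real \<Rightarrow> ereal" where
  "CIGF F \<alpha> \<beta> = enn2ereal (\<integral>\<^sup>+ x \<in> {x. cigf_l F < ereal x \<and> ereal x < cigf_r F}.
      ennreal ((F x) powr \<alpha> * (1 - F x) powr \<beta>) \<partial>lborel)"

definition cigf_dom :: "(real \<Rightarrow> real) \<Rightarrow> (real \<times> real) set" where
  "cigf_dom F = {(\<alpha>, \<beta>). CIGF F \<alpha> \<beta> < \<infinity>}"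

definition CIGM_H :: "(real \<Rightarrow> real) \<Rightarrow> real \<Rightarrow> ereal" where
  "CIGM_H F \<alpha> = CIGF F \<alpha> 0"

definition CRIGM_K :: "(real \<Rightarrow> real) \<Rightarrow> real \<Rightarrow> ereal" where
  "CRIGM_K F \<beta> = CIGF F 0 \<beta>"

end

theory Submission
  imports Defs
begin

text \<open>For \<open>0 \<le> u \<le> 1\<close> and \<open>0 \<le> a \<le> 1\<close>, concavity of \<open>u \<mapsto> u powr a\<close> gives the Bernoulli
  inequality \<open>u powr a \<le> 1 - a (1 - u)\<close>. Applied to \<open>u = F\<close> and multiplied by \<open>(1 - F) powr \<beta>\<close>,
  it bounds the integrand of \<open>G(\<alpha>, \<beta>)\<close> by that of \<open>K(\<beta>) - \<alpha> K(\<beta> + 1)\<close>; integration preserves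
  the bound. Exchanging the roles of \<open>F\<close> and \<open>1 - F\<close> gives the bound by \<open>H\<close>.\<close>

lemma powr_le_one_minus_mult:
  fixes u a :: real
  assumes "0 \<le> u" "u \<le> 1" "0 \<le> a" "a \<le> 1"
  shows "u powr a \<le> 1 - a * (1 - u)"
proof (cases "u = 0 \<or> a = 1")
  case True
  then show ?thesis using assms by auto
next
  case False
  have "u powr a * 1 powr (1 - a) \<le> a * u + (1 - a) * 1"
    by (rule Youngs_inequality_0) (use assms False in auto)
  then show ?thesis by (simp add: algebra_simps)
qed

text \<open>Since \<open>0 powr 0 = 0\<close>, the factor \<open>p powr 0\<close> is not \<open>1\<close> when \<open>p = 0\<close>; both sides vanish then.\<close>

lemma powr_mult_powr_le_diff:
  fixes p q a b :: real
  assumes "0 \<le> p" "0 \<le> q" "p + q = 1" "0 \<le> a" "a \<le> 1"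
  shows "p powr a * q powr b \<le> p powr 0 * q powr b - a * (p powr 0 * q powr (b + 1))"
proof (cases "p = 0")
  case False
  have "1 - p = q" using \<open>p + q = 1\<close> by simp
  then have "p powr a \<le> 1 - a * q"
    using powr_le_one_minus_mult[of p a] assms by (simp only:)
  then have "p powr a * q powr b \<le> (1 - a * q) * q powr b"
    by (rule mult_right_mono) simp
  also have "\<dots> = q powr b - a * q powr (b + 1)"
    using \<open>0 \<le> q\<close> by (cases "q = 0") (simp_all add: powr_add algebra_simps)
  finally show ?thesis using False by simp
qed simp

lemma enn2ereal_le_add_cmult_minus:
  fixes A B :: ennreal and a :: real
  assumes "0 \<le> a"
  shows "enn2ereal A \<le> enn2ereal (A + ennreal a * B) - ereal a * enn2ereal B"
proof (cases "B = \<infinity>")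
  case True
  then show ?thesis
    using assms by (cases "a = 0") (simp_all add: zero_ereal_def[symmetric] ennreal_mult_eq_top_iff)
next
  case False
  then obtain b where b: "B = ennreal b" "0 \<le> b" by (cases B) auto
  have "enn2ereal (A + ennreal a * B) = enn2ereal A + ereal (a * b)"
    using b assms by (simp add: ennreal_mult'[symmetric] plus_ennreal.rep_eq enn2ereal_ennreal)
  moreover have "ereal a * enn2ereal B = ereal (a * b)"
    using b by (simp add: enn2ereal_ennreal)
  ultimately show ?thesis by (cases "enn2ereal A") auto
qed

lemma set_nn_integral_le_diff:
  fixes f g h :: "'a \<Rightarrow> real" and a :: real
  assumes [measurable]: "f \<in> borel_measurable M" "g \<in> borel_measurable M" "h \<in> borel_measurable M"
    "S \<in> sets M"
    and "0 \<le> a" and f_nonneg: "\<And>x. 0 \<le> f x" and h_nonneg: "\<And>x. 0 \<le> h x"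
    and f_le: "\<And>x. f x \<le> g x - a * h x"
  shows "enn2ereal (\<integral>\<^sup>+x\<in>S. ennreal (f x) \<partial>M)
    \<le> enn2ereal (\<integral>\<^sup>+x\<in>S. ennreal (g x) \<partial>M) - ereal a * enn2ereal (\<integral>\<^sup>+x\<in>S. ennreal (h x) \<partial>M)"
proof -
  have "(\<integral>\<^sup>+x\<in>S. ennreal (g x) \<partial>M)
      = (\<integral>\<^sup>+x. ennreal (g x - a * h x) * indicator S x + ennreal a * (ennreal (h x) * indicator S x) \<partial>M)"
  proof (rule nn_integral_cong)
    fix x
    have "0 \<le> g x - a * h x" using f_nonneg[of x] f_le[of x] by linarith
    then have "ennreal (g x) = ennreal (g x - a * h x) + ennreal a * ennreal (h x)"
      using \<open>0 \<le> a\<close> h_nonneg[of x]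
      by (simp add: ennreal_mult'[symmetric] ennreal_plus[symmetric] del: ennreal_plus)
    then show "ennreal (g x) * indicator S x
        = ennreal (g x - a * h x) * indicator S x + ennreal a * (ennreal (h x) * indicator S x)"
      by (simp split: split_indicator)
  qed
  also have "\<dots> = (\<integral>\<^sup>+x\<in>S. ennreal (g x - a * h x) \<partial>M) + ennreal a * (\<integral>\<^sup>+x\<in>S. ennreal (h x) \<partial>M)"
    by (simp add: nn_integral_add nn_integral_cmult)
  finally have g_split: "(\<integral>\<^sup>+x\<in>S. ennreal (g x) \<partial>M)
      = (\<integral>\<^sup>+x\<in>S. ennreal (g x - a * h x) \<partial>M) + ennreal a * (\<integral>\<^sup>+x\<in>S. ennreal (h x) \<partial>M)" .
  have "(\<integral>\<^sup>+x\<in>S. ennreal (f x) \<partial>M) \<le> (\<integral>\<^sup>+x\<in>S. ennreal (g x - a * h x) \<partial>M)"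
    by (intro nn_integral_mono mult_right_mono ennreal_leI f_le) simp
  then have "enn2ereal (\<integral>\<^sup>+x\<in>S. ennreal (f x) \<partial>M) \<le> enn2ereal (\<integral>\<^sup>+x\<in>S. ennreal (g x - a * h x) \<partial>M)"
    by (simp add: less_eq_ennreal.rep_eq)
  also have "\<dots> \<le> enn2ereal (\<integral>\<^sup>+x\<in>S. ennreal (g x) \<partial>M) - ereal a * enn2ereal (\<integral>\<^sup>+x\<in>S. ennreal (h x) \<partial>M)"
    unfolding g_split by (rule enn2ereal_le_add_cmult_minus[OF \<open>0 \<le> a\<close>])
  finally show ?thesis .
qed

lemma CIGF_le_CRIGM_K:
  fixes F :: "real \<Rightarrow> real"
  assumes "mono F" "\<And>x. 0 \<le> F x" "\<And>x. F x \<le> 1" "0 \<le> \<alpha>" "\<alpha> \<le> 1"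
  shows "CIGF F \<alpha> \<beta> \<le> CRIGM_K F \<beta> - ereal \<alpha> * CRIGM_K F (\<beta> + 1)"
proof -
  have [measurable]: "F \<in> borel_measurable borel" using borel_measurable_mono[OF \<open>mono F\<close>] .
  show ?thesis
    unfolding CRIGM_K_def CIGF_def
    by (rule set_nn_integral_le_diff) (use assms powr_mult_powr_le_diff in auto)
qed

lemma CIGF_le_CIGM_H:
  fixes F :: "real \<Rightarrow> real"
  assumes "mono F" "\<And>x. 0 \<le> F x" "\<And>x. F x \<le> 1" "0 \<le> \<beta>" "\<beta> \<le> 1"
  shows "CIGF F \<alpha> \<beta> \<le> CIGM_H F \<alpha> - ereal \<beta> * CIGM_H F (\<alpha> + 1)"
proof -
  have [measurable]: "F \<in> borel_measurable borel" using borel_measurable_mono[OF \<open>mono F\<close>] .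
  have "F x powr \<alpha> * (1 - F x) powr \<beta>
      \<le> F x powr \<alpha> * (1 - F x) powr 0 - \<beta> * (F x powr (\<alpha> + 1) * (1 - F x) powr 0)" for x
    using powr_mult_powr_le_diff[of "1 - F x" "F x" \<beta> \<alpha>] assms by (simp add: mult.commute)
  then show ?thesis
    unfolding CIGM_H_def CIGF_def
    by (intro set_nn_integral_le_diff) (use assms in auto)
qed

theorem proposition5:
  fixes M :: "'a measure" and X :: "'a \<Rightarrow> real"
  assumes "prob_space M" and "X \<in> borel_measurable M"
  shows "(\<forall>\<alpha> \<beta>. (\<alpha>, \<beta>) \<in> cigf_dom (cdf (distr M borel X)) \<and> \<alpha> \<in> {0..1} \<longrightarrow>
            CIGF (cdf (distr M borel X)) \<alpha> \<beta>
              \<le> CRIGM_K (cdf (distr M borel X)) \<beta>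
                 - ereal \<alpha> * CRIGM_K (cdf (distr M borel X)) (\<beta> + 1))
       \<and> (\<forall>\<alpha> \<beta>. (\<alpha>, \<beta>) \<in> cigf_dom (cdf (distr M borel X)) \<and> \<beta> \<in> {0..1} \<longrightarrow>
            CIGF (cdf (distr M borel X)) \<alpha> \<beta>
              \<le> CIGM_H (cdf (distr M borel X)) \<alpha>
                 - ereal \<beta> * CIGM_H (cdf (distr M borel X)) (\<alpha> + 1))"
proof -
  interpret real_distribution "distr M borel X"
    using prob_space.real_distribution_distr[OF assms(1)] assms(2) by simp
  have "mono (cdf (distr M borel X))"
    by (simp add: mono_def cdf_nondecreasing)
  then show ?thesis
    using CIGF_le_CRIGM_K CIGF_le_CIGM_H cdf_nonneg cdf_bounded_prob by auto
qed

end
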